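(* Let $m \geq 0$ be a fixed integer, and for $T>e$ put $\Delta = \Delta(T) = 1/\log^{m+2} T$. Then the following two statements are equivalent: \begin{enumerate} \item For every $\epsilon > 0$, $\zeta^{(m)}(1+it) = O(\log^{\epsilon} t)$ as $t \to \infty$. \item For every $\epsilon > 0$ and every positive integer $k$, \[ \frac{1}{2\Delta} \int_{T-\Delta}^{T+\Delta} \bigl|\zeta^{(m)}(1+it)\bigr|^{2k}\, dt = O(\log^{\epsilon} T) \quad \text{as } T \to \infty . \] \end{enumerate} (The implied $O$-constants may depend on $m$, $\epsilon$ and $k$.)
   Context: $\zeta(s)$ denotes the Riemann zeta function, $s=\sigma+it$, defined by $\sum_{n\ge1} n^{-s}$ for $\sigma>1$ and meromorphically continued to $\mathbb{C}$ with only a simple pole at $s=1$; $\zeta^{(m)}$ is its $m$-th derivative with respect to $s$, and $\zeta^{(m)}(1+it)$ is its value on the line $\sigma=1$ for real $t$. *)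

theory Defs
  imports "HOL-Complex_Analysis.Complex_Analysis" "HOL-Library.Landau_Symbols"
begin

text \<open>The Riemann zeta function: the (unique, by the identity theorem) function holomorphic
  on the complex plane minus the point 1 that agrees with the Dirichlet series
  sum over n of n to the power -s on the half-plane Re s > 1.\<close>
definition riemann_zeta :: "complex \<Rightarrow> complex" where
  "riemann_zeta = (SOME f. f holomorphic_on (- {1}) \<and>
       (\<forall>s. 1 < Re s \<longrightarrow> f s = (\<Sum>n. 1 / (of_nat (Suc n)) powr s)))"

definition zeta_deriv :: "nat \<Rightarrow> complex \<Rightarrow> complex" where
  "zeta_deriv m = (deriv ^^ m) riemann_zeta"

definition Delta :: "nat \<Rightarrow> real \<Rightarrow> real" where
  "Delta m T = 1 / (ln T) ^ (m + 2)"

end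

theory Submission
  imports Defs
begin

text \<open>Pointwise bounds give bounds for the window averages, since ln t \<le> 2 ln T on the window.
  Conversely, zeta(s) = O(log t) on the disc of radius 1 / log t around 1 + it, so by Cauchy's
  estimate zeta^(m+1)(1 + it) = O(log^(m+2) t). Hence zeta^(m) changes by O(1) across a window of
  length 2 Delta, and |zeta^(m)(1 + iT)| is at most O(1) plus the square root of the mean of
  |zeta^(m)|^2 over the window.

  Since riemann_zeta is only specified by a choice operator, its continuation must be constructed.
  The binomial expansion of (n+2)^(1-s) around n+1 expresses (s - 1) zeta(s) through the shifted
  values zeta(s + j - 1), j \<le> K, plus a series converging for Re s > 1 - K; this continues zeta
  strip by strip to the whole plane.\<close>

definition binom_remainder :: "nat \<Rightarrow> complex \<Rightarrow> complex \<Rightarrow> complex" where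
  "binom_remainder K a w = (1 + w) powr a - (\<Sum>j\<le>K. (a gchoose j) * w ^ j)"

lemma has_field_derivative_powr_one_plus:
  fixes a w :: complex
  assumes "1 + w \<notin> \<real>\<^sub>\<le>\<^sub>0"
  shows "((\<lambda>w. (1 + w) powr a) has_field_derivative a * (1 + w) powr (a - 1)) (at w)"
  using has_field_derivative_powr[OF assms, of a]
    DERIV_chain2[of "\<lambda>z. z powr a" "a * (1 + w) powr (a - 1)" "\<lambda>w. 1 + w" w 1] assms
  by (auto intro!: derivative_eq_intros)

lemma has_field_derivative_binom_remainder_0:
  assumes "1 + w \<notin> \<real>\<^sub>\<le>\<^sub>0"
  shows "(binom_remainder 0 a has_field_derivative a * (1 + w) powr (a - 1)) (at w)"
proof -
  have "binom_remainder 0 a = (\<lambda>w. (1 + w) powr a - 1)"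
    by (auto simp: binom_remainder_def fun_eq_iff)
  then show ?thesis
    using DERIV_diff[OF has_field_derivative_powr_one_plus[OF assms] DERIV_const] by simp
qed

lemma has_field_derivative_binom_remainder_Suc:
  assumes "1 + w \<notin> \<real>\<^sub>\<le>\<^sub>0"
  shows "(binom_remainder (Suc K) a has_field_derivative a * binom_remainder K (a - 1) w) (at w)"
proof -
  have poly: "((\<lambda>w. \<Sum>j\<le>Suc K. (a gchoose j) * w ^ j) has_field_derivative
       (\<Sum>j\<le>Suc K. (a gchoose j) * (of_nat j * w ^ (j - 1)))) (at w)"
    by (intro DERIV_sum DERIV_cmult) (use DERIV_power[OF DERIV_ident] in simp)
  have "(\<Sum>j\<le>Suc K. (a gchoose j) * (of_nat j * w ^ (j - 1)))
      = (\<Sum>i\<le>K. (of_nat (Suc i) * (a gchoose Suc i)) * w ^ i)"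
    by (subst sum.atMost_Suc_shift) (simp add: mult_ac)
  also have "\<dots> = a * (\<Sum>i\<le>K. ((a - 1) gchoose i) * w ^ i)"
    unfolding gbinomial_absorption by (simp add: sum_distrib_left mult_ac)
  finally have poly_deriv: "(\<Sum>j\<le>Suc K. (a gchoose j) * (of_nat j * w ^ (j - 1)))
      = a * (\<Sum>i\<le>K. ((a - 1) gchoose i) * w ^ i)" .
  have "(binom_remainder (Suc K) a has_field_derivative
      a * (1 + w) powr (a - 1) - a * (\<Sum>i\<le>K. ((a - 1) gchoose i) * w ^ i)) (at w)"
    unfolding binom_remainder_def
    using DERIV_diff[OF has_field_derivative_powr_one_plus[OF assms] poly] poly_deriv
    by (simp add: fun_diff_def)
  then show ?thesis by (simp add: binom_remainder_def algebra_simps)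
qed

lemma binom_remainder_at_0 [simp]: "binom_remainder K a 0 = 0"
  by (simp add: binom_remainder_def zero_power)

lemma one_plus_of_real_not_nonpos: "0 \<le> v \<Longrightarrow> 1 + complex_of_real v \<notin> \<real>\<^sub>\<le>\<^sub>0"
  using nonpos_Reals_of_real_iff[of "1 + v"] by simp

lemma powr_le_two_powr_abs: "1 \<le> (x::real) \<Longrightarrow> x \<le> 2 \<Longrightarrow> x powr e \<le> 2 powr \<bar>e\<bar>"
proof (cases "e \<ge> 0")
  case True
  assume "1 \<le> x" "x \<le> 2"
  then have "x powr e \<le> 2 powr e" using True by (intro powr_mono2) auto
  also have "\<dots> \<le> 2 powr \<bar>e\<bar>" by (intro powr_mono) auto
  finally show ?thesis .
next
  case False
  assume "1 \<le> x" "x \<le> 2"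
  then have "x powr e \<le> 1" using False powr_mono[of e 0 x] by auto
  also have "1 \<le> 2 powr \<bar>e\<bar>" by (simp add: ge_one_powr_ge_zero)
  finally show ?thesis .
qed

lemma norm_le_of_real_derivative_bound:
  fixes f :: "complex \<Rightarrow> complex"
  assumes "0 \<le> u" "f 0 = 0"
    and deriv: "\<And>v. 0 \<le> v \<Longrightarrow> v \<le> u \<Longrightarrow> (f has_field_derivative f' v) (at (of_real v))"
    and bound: "\<And>v. 0 \<le> v \<Longrightarrow> v \<le> u \<Longrightarrow> norm (f' v) \<le> B"
  shows "norm (f (of_real u)) \<le> B * u"
proof -
  have segment: "closed_segment 0 (complex_of_real u) = of_real ` {0..u}"
    using closed_segment_of_real[of 0 u] assms(1) by (simp add: closed_segment_eq_real_ivl)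
  have "norm (f (of_real u) - f 0) \<le> B * norm (complex_of_real u - 0)"
  proof (rule field_differentiable_bound[where f' = "\<lambda>z. f' (Re z)"])
    fix z assume "z \<in> closed_segment 0 (complex_of_real u)"
    then obtain v where v: "z = of_real v" "0 \<le> v" "v \<le> u" by (auto simp: segment)
    show "(f has_field_derivative f' (Re z)) (at z within closed_segment 0 (complex_of_real u))"
      using deriv[OF v(2,3)] v(1) by (simp add: has_field_derivative_at_within)
    show "norm (f' (Re z)) \<le> B" using bound[OF v(2,3)] v(1) by simp
  qed auto
  then show ?thesis using assms(1,2) by simp
qed

lemma norm_binom_remainder_le:
  assumes "0 \<le> u" "u \<le> 1"
  shows "norm (binom_remainder K a (of_real u))
           \<le> (norm a + K) ^ (K + 1) * 2 powr (\<bar>Re a\<bar> + K + 1) * u ^ (K + 1)"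
  using assms
proof (induction K arbitrary: a u)
  case 0
  have "norm (binom_remainder 0 a (of_real u)) \<le> (norm a * 2 powr (\<bar>Re a\<bar> + 1)) * u"
  proof (rule norm_le_of_real_derivative_bound)
    fix v :: real assume v: "0 \<le> v" "v \<le> u"
    show "(binom_remainder 0 a has_field_derivative a * (1 + of_real v) powr (a - 1)) (at (of_real v))"
      by (rule has_field_derivative_binom_remainder_0[OF one_plus_of_real_not_nonpos[OF v(1)]])
    have "norm ((1 + of_real v) powr (a - 1)) = (1 + v) powr (Re a - 1)"
      using v norm_powr_real_powr[of "of_real (1 + v)" "a - 1"] by simp
    also have "\<dots> \<le> 2 powr \<bar>Re a - 1\<bar>" using v 0 by (intro powr_le_two_powr_abs) auto
    also have "\<dots> \<le> 2 powr (\<bar>Re a\<bar> + 1)" by (intro powr_mono) auto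
    finally show "norm (a * (1 + of_real v) powr (a - 1)) \<le> norm a * 2 powr (\<bar>Re a\<bar> + 1)"
      by (simp add: norm_mult mult_left_mono)
  qed (use 0 in auto)
  then show ?case by simp
next
  case (Suc K)
  define B where "B = (norm a + Suc K) ^ (K + 1) * 2 powr (\<bar>Re a\<bar> + Suc K + 1)"
  have "norm (binom_remainder (Suc K) a (of_real u)) \<le> (norm a * (B * u ^ (K + 1))) * u"
  proof (rule norm_le_of_real_derivative_bound)
    fix v :: real assume v: "0 \<le> v" "v \<le> u"
    show "(binom_remainder (Suc K) a has_field_derivative
           a * binom_remainder K (a - 1) (of_real v)) (at (of_real v))"
      by (rule has_field_derivative_binom_remainder_Suc[OF one_plus_of_real_not_nonpos[OF v(1)]])
    have "norm (binom_remainder K (a - 1) (of_real v))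
        \<le> (norm (a - 1) + K) ^ (K + 1) * 2 powr (\<bar>Re (a - 1)\<bar> + K + 1) * v ^ (K + 1)"
      using v Suc.prems by (intro Suc.IH) auto
    also have "\<dots> \<le> B * u ^ (K + 1)"
      unfolding B_def using v norm_triangle_ineq4[of a 1]
      by (intro mult_mono power_mono powr_mono) (auto simp: abs_if)
    finally show "norm (a * binom_remainder K (a - 1) (of_real v)) \<le> norm a * (B * u ^ (K + 1))"
      by (simp add: norm_mult mult_left_mono)
  qed (use Suc.prems in auto)
  also have "\<dots> = norm a * B * u ^ (Suc K + 1)" by (simp add: power_Suc algebra_simps)
  also have "\<dots> \<le> (norm a + Suc K) * B * u ^ (Suc K + 1)"
    using Suc.prems by (intro mult_right_mono) (auto simp: B_def)
  finally show ?case by (simp add: B_def algebra_simps)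
qed

lemma holomorphic_on_suminf_dominated:
  fixes f :: "nat \<Rightarrow> complex \<Rightarrow> complex"
  assumes "open S" and "\<And>n. f n holomorphic_on S"
    and "\<And>z. z \<in> S \<Longrightarrow> \<exists>r>0. cball z r \<subseteq> S \<and>
           (\<exists>M. summable M \<and> (\<forall>n. \<forall>w\<in>cball z r. norm (f n w) \<le> M n))"
  shows "(\<lambda>s. \<Sum>n. f n s) holomorphic_on S"
proof (rule holomorphic_uniform_sequence[where f = "\<lambda>n s. \<Sum>i<n. f i s"])
  show "(\<lambda>s. \<Sum>i<n. f i s) holomorphic_on S" for n
    using assms(2) by (intro holomorphic_on_sum)
  fix z assume z: "z \<in> S"
  obtain r where r: "r > 0" "cball z r \<subseteq> S"
      and "\<exists>M. summable M \<and> (\<forall>n. \<forall>w\<in>cball z r. norm (f n w) \<le> M n)"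
    using assms(3)[OF z] by auto
  then obtain M where M: "summable M" "\<And>n w. w \<in> cball z r \<Longrightarrow> norm (f n w) \<le> M n"
    by blast
  have "uniform_limit (cball z r) (\<lambda>n s. \<Sum>i<n. f i s) (\<lambda>s. \<Sum>n. f n s) sequentially"
    using M by (intro Weierstrass_m_test) auto
  then show "\<exists>r>0. cball z r \<subseteq> S \<and>
      uniform_limit (cball z r) (\<lambda>n s. \<Sum>i<n. f i s) (\<lambda>s. \<Sum>n. f n s) sequentially"
    using r by blast
qed (fact assms(1))

lemma summable_real_Suc_powr: "p < -1 \<Longrightarrow> summable (\<lambda>n. real (Suc n) powr p)"
  using summable_real_powr_iff[of p] summable_Suc_iff[of "\<lambda>n. real n powr p"] by simp

definition dirichlet_zeta :: "complex \<Rightarrow> complex" where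
  "dirichlet_zeta s = (\<Sum>n. 1 / of_nat (Suc n) powr s)"

lemma dirichlet_zeta_sums:
  assumes "Re s > 1"
  shows "(\<lambda>n. of_nat (Suc n) powr (- s)) sums dirichlet_zeta s"
proof -
  have "norm (of_nat (Suc n) powr (- s) :: complex) = real (Suc n) powr (- Re s)" for n
    using norm_powr_real_powr[of "of_nat (Suc n)" "- s"] by simp
  then have "summable (\<lambda>n. norm (of_nat (Suc n) powr (- s) :: complex))"
    using assms summable_real_Suc_powr[of "- Re s"] by simp
  then have "summable (\<lambda>n. of_nat (Suc n) powr (- s) :: complex)"
    by (rule summable_norm_cancel)
  moreover have "(\<lambda>n. of_nat (Suc n) powr (- s) :: complex) = (\<lambda>n. 1 / of_nat (Suc n) powr s)"
    by (simp add: powr_minus divide_inverse)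
  ultimately show ?thesis unfolding dirichlet_zeta_def by (simp add: summable_sums)
qed

text \<open>The n-th term is (n+2)^(1-s) minus the Taylor polynomial of degree K of x^(1-s)
  at x = n+1, evaluated at step 1; it is O(n^(-Re s - K)).\<close>
definition taylor_rem :: "nat \<Rightarrow> nat \<Rightarrow> complex \<Rightarrow> complex" where
  "taylor_rem K n s = of_nat (Suc n) powr (1 - s) * binom_remainder K (1 - s) (1 / of_nat (Suc n))"

definition taylor_rem_sum :: "nat \<Rightarrow> complex \<Rightarrow> complex" where
  "taylor_rem_sum K s = (\<Sum>n. taylor_rem K n s)"

lemma one_plus_inverse_Suc_nonzero: "1 + 1 / (of_nat (Suc n) :: complex) \<noteq> 0"
proof -
  have "1 + 1 / (of_nat (Suc n) :: complex) = of_real (1 + 1 / real (Suc n))" by simp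
  moreover have "1 + 1 / real (Suc n) > 0" by (simp add: add_pos_nonneg)
  ultimately show ?thesis by (metis of_real_eq_0_iff less_irrefl)
qed

lemma holomorphic_gchoose [holomorphic_intros]:
  "f holomorphic_on S \<Longrightarrow> (\<lambda>s. f s gchoose j) holomorphic_on S"
  unfolding gbinomial_altdef_of_nat by (intro holomorphic_intros) auto

lemma holomorphic_binom_remainder [holomorphic_intros]:
  assumes "f holomorphic_on S" "1 + w \<noteq> 0"
  shows "(\<lambda>s. binom_remainder K (f s) w) holomorphic_on S"
  unfolding binom_remainder_def using assms by (intro holomorphic_intros) auto

lemma holomorphic_taylor_rem: "taylor_rem K n holomorphic_on S"
  using one_plus_inverse_Suc_nonzero[of n]
  unfolding taylor_rem_def[abs_def] by (intro holomorphic_intros) auto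

lemma norm_taylor_rem_le:
  "norm (taylor_rem K n s)
     \<le> (norm (1 - s) + K) ^ (K + 1) * 2 powr (\<bar>1 - Re s\<bar> + K + 1) * real (Suc n) powr (- Re s - K)"
proof -
  define x where "x = real (Suc n)"
  define C where "C = (norm (1 - s) + K) ^ (K + 1) * 2 powr (\<bar>1 - Re s\<bar> + K + 1)"
  have x: "x \<ge> 1" by (simp add: x_def)
  have step: "(1 / of_nat (Suc n) :: complex) = of_real (1 / x)" by (simp add: x_def)
  have base: "norm (of_nat (Suc n) powr (1 - s) :: complex) = x powr (1 - Re s)"
    using norm_powr_real_powr[of "of_nat (Suc n)" "1 - s"] by (simp add: x_def)
  have "norm (binom_remainder K (1 - s) (of_real (1 / x))) \<le> C * (1 / x) ^ (K + 1)"
    using x norm_binom_remainder_le[of "1 / x" K "1 - s"] by (simp add: C_def)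
  then have "norm (taylor_rem K n s) \<le> x powr (1 - Re s) * (C * (1 / x) ^ (K + 1))"
    unfolding taylor_rem_def step norm_mult base by (intro mult_left_mono) auto
  also have "(1 / x) ^ (K + 1) = x powr (- real (K + 1))"
  proof -
    have "x powr (- real (K + 1)) = inverse (x powr real (K + 1))" by (rule powr_minus)
    also have "x powr real (K + 1) = x ^ (K + 1)" using x by (intro powr_realpow) auto
    finally show ?thesis by (simp add: power_one_over divide_inverse power_inverse)
  qed
  also have "x powr (1 - Re s) * (C * x powr (- real (K + 1))) = C * x powr (- Re s - K)"
    by (simp add: powr_add[symmetric])
  finally show ?thesis by (simp add: x_def C_def)
qed

lemma holomorphic_taylor_rem_sum: "taylor_rem_sum K holomorphic_on {s. Re s > 1 - real K}"
  unfolding taylor_rem_sum_def[abs_def]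
proof (rule holomorphic_on_suminf_dominated)
  show "open {s. Re s > 1 - real K}" by (simp add: open_halfspace_Re_gt)
  show "taylor_rem K n holomorphic_on {s. Re s > 1 - real K}" for n by (rule holomorphic_taylor_rem)
  fix z assume z: "z \<in> {s. Re s > 1 - real K}"
  define r where "r = (Re z - (1 - real K)) / 2"
  have r: "r > 0" using z by (simp add: r_def)
  have Re_close: "\<bar>Re z - Re w\<bar> \<le> r" if "w \<in> cball z r" for w
    using that abs_Re_le_cmod[of "z - w"] by (simp add: dist_norm)
  have disc: "cball z r \<subseteq> {s. Re s > 1 - real K}"
  proof
    fix w assume "w \<in> cball z r"
    then have "Re z - Re w \<le> r" using Re_close by fastforce
    then show "w \<in> {s. Re s > 1 - real K}" using z unfolding r_def by simp
  qed
  define C where "C = (norm (1 - z) + r + K) ^ (K + 1) * 2 powr (\<bar>1 - Re z\<bar> + r + K + 1)"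
  have "\<forall>n. \<forall>w\<in>cball z r. norm (taylor_rem K n w) \<le> C * real (Suc n) powr (- (Re z - r) - K)"
  proof (intro allI ballI)
    fix n w assume w: "w \<in> cball z r"
    have close: "norm (z - w) \<le> r" using w by (simp add: dist_norm)
    note norm_taylor_rem_le[of K n w]
    also have "(norm (1 - w) + K) ^ (K + 1) * 2 powr (\<bar>1 - Re w\<bar> + K + 1) * real (Suc n) powr (- Re w - K)
        \<le> C * real (Suc n) powr (- (Re z - r) - K)"
      unfolding C_def
    proof (intro mult_mono power_mono powr_mono add_mono order_refl)
      show "norm (1 - w) \<le> norm (1 - z) + r" using norm_triangle_ineq[of "1 - z" "z - w"] close by simp
      show "\<bar>1 - Re w\<bar> \<le> \<bar>1 - Re z\<bar> + r" using Re_close[OF w] by linarith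
      show "- Re w - real K \<le> - (Re z - r) - real K" using Re_close[OF w] by linarith
    qed (use r in \<open>auto intro!: mult_nonneg_nonneg\<close>)
    finally show "norm (taylor_rem K n w) \<le> C * real (Suc n) powr (- (Re z - r) - K)" .
  qed
  moreover have "summable (\<lambda>n. C * real (Suc n) powr (- (Re z - r) - K))"
    using z by (intro summable_mult summable_real_Suc_powr) (simp add: r_def field_simps)
  ultimately show "\<exists>r>0. cball z r \<subseteq> {s. Re s > 1 - real K} \<and>
      (\<exists>M. summable M \<and> (\<forall>n. \<forall>w\<in>cball z r. norm (taylor_rem K n w) \<le> M n))"
    using r disc by blast
qed

lemma taylor_rem_eq:
  "taylor_rem K n s = of_nat (Suc (Suc n)) powr (1 - s) -
     (\<Sum>j\<le>K. ((1 - s) gchoose j) * of_nat (Suc n) powr (1 - s - of_nat j))"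
proof -
  define x :: complex where "x = of_nat (Suc n)"
  have x: "x \<noteq> 0" "x \<in> \<real>" "Re x \<ge> 0"
    unfolding x_def of_nat_eq_0_iff by auto
  have "1 + 1 / x = of_real (1 + 1 / real (Suc n))" by (simp add: x_def)
  then have y: "1 + 1 / x \<in> \<real>" "Re (1 + 1 / x) \<ge> 0" by (auto simp del: of_real_add of_real_divide)
  have leading: "x powr (1 - s) * (1 + 1 / x) powr (1 - s) = of_nat (Suc (Suc n)) powr (1 - s)"
  proof -
    have "x powr (1 - s) * (1 + 1 / x) powr (1 - s) = (x * (1 + 1 / x)) powr (1 - s)"
      using powr_times_real[OF x(2) y(1) x(3) y(2)] by simp
    also have "x * (1 + 1 / x) = of_nat (Suc (Suc n))" using x by (simp add: x_def field_simps)
    finally show ?thesis .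
  qed
  have powers: "x powr (1 - s) * (1 / x) ^ j = x powr (1 - s - of_nat j)" for j
  proof -
    have "x powr (1 - s - of_nat j) = x powr (1 - s) / x powr (of_nat j)" by (rule powr_diff)
    also have "x powr (of_nat j) = x ^ j" using x by (simp add: powr_nat')
    finally show ?thesis by (simp add: power_one_over divide_inverse power_inverse)
  qed
  have "taylor_rem K n s = x powr (1 - s) * (1 + 1 / x) powr (1 - s)
      - (\<Sum>j\<le>K. ((1 - s) gchoose j) * (x powr (1 - s) * (1 / x) ^ j))"
    unfolding taylor_rem_def binom_remainder_def x_def[symmetric] by (simp add: algebra_simps sum_distrib_left)
  also have "\<dots> = of_nat (Suc (Suc n)) powr (1 - s) - (\<Sum>j\<le>K. ((1 - s) gchoose j) * x powr (1 - s - of_nat j))"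
    unfolding leading powers ..
  finally show ?thesis by (simp add: x_def)
qed

text \<open>For Re s > 1 the sum telescopes: the j = 0 terms collapse to -1 and the others are
  multiples of shifted zeta values.\<close>
lemma taylor_rem_sum_eq:
  assumes s: "Re s > 1"
  shows "taylor_rem_sum K s = -1 - (\<Sum>j\<in>{1..K}. ((1 - s) gchoose j) * dirichlet_zeta (s + of_nat j - 1))"
proof -
  define f where "f n = (of_nat (Suc n) :: complex) powr (1 - s)" for n
  have "(\<lambda>n. real (Suc n) powr (1 - Re s)) \<longlonglongrightarrow> 0"
    using s by (intro tendsto_neg_powr filterlim_compose[OF filterlim_real_sequentially filterlim_Suc]) auto
  moreover have "norm (f n) = real (Suc n) powr (1 - Re s)" for n
    using norm_powr_real_powr[of "of_nat (Suc n)" "1 - s"] by (simp add: f_def)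
  ultimately have "f \<longlonglongrightarrow> 0" by (subst tendsto_norm_zero_iff[symmetric]) simp
  then have telescope: "(\<lambda>n. f (Suc n) - f n) sums (0 - f 0)" by (rule telescope_sums)
  have "(\<lambda>n. ((1 - s) gchoose j) * of_nat (Suc n) powr (1 - s - of_nat j))
      sums (((1 - s) gchoose j) * dirichlet_zeta (s + of_nat j - 1))" if j: "j \<in> {1..K}" for j
  proof -
    have "Re (s + of_nat j - 1) > 1" using s j by simp
    from dirichlet_zeta_sums[OF this]
    have "(\<lambda>n. of_nat (Suc n) powr (1 - s - of_nat j)) sums dirichlet_zeta (s + of_nat j - 1)"
      by (simp add: algebra_simps)
    then show ?thesis by (rule sums_mult)
  qed
  then have shifted: "(\<lambda>n. \<Sum>j\<in>{1..K}. ((1 - s) gchoose j) * of_nat (Suc n) powr (1 - s - of_nat j))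
      sums (\<Sum>j\<in>{1..K}. ((1 - s) gchoose j) * dirichlet_zeta (s + of_nat j - 1))"
    by (rule sums_sum)
  have "{..K} = insert 0 {1..K}" by auto
  then have "taylor_rem K n s = (f (Suc n) - f n)
      - (\<Sum>j\<in>{1..K}. ((1 - s) gchoose j) * of_nat (Suc n) powr (1 - s - of_nat j))" for n
    unfolding taylor_rem_eq by (simp add: f_def)
  then have "(\<lambda>n. taylor_rem K n s)
      sums ((0 - f 0) - (\<Sum>j\<in>{1..K}. ((1 - s) gchoose j) * dirichlet_zeta (s + of_nat j - 1)))"
    using sums_diff[OF telescope shifted] by simp
  moreover have "f 0 = 1" by (simp add: f_def)
  ultimately show ?thesis unfolding taylor_rem_sum_def by (simp add: sums_iff)
qed

lemma connected_halfplane_minus_point: "connected ({s::complex. Re s > c} - {a})"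
  by (intro connected_open_diff_countable convex_connected)
     (auto simp: open_halfspace_Re_gt convex_halfspace_Re_gt)

lemma taylor_rem_sum_1_at_1: "taylor_rem_sum 1 1 = 0"
  using one_plus_inverse_Suc_nonzero by (simp add: taylor_rem_sum_def taylor_rem_def binom_remainder_def)

definition is_zeta_regular_part :: "nat \<Rightarrow> (complex \<Rightarrow> complex) \<Rightarrow> bool" where
  "is_zeta_regular_part K E \<longleftrightarrow> E holomorphic_on {s. Re s > - real K} \<and>
     (\<forall>s. Re s > 1 \<longrightarrow> E s + 1 / (s - 1) = dirichlet_zeta s)"

lemma is_zeta_regular_part_0:
  "is_zeta_regular_part 0 (\<lambda>s. if s = 1 then deriv (taylor_rem_sum 1) 1 else taylor_rem_sum 1 s / (s - 1))"
  unfolding is_zeta_regular_part_def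
proof (intro conjI allI impI)
  have "taylor_rem_sum 1 holomorphic_on {s. Re s > 0}"
    using holomorphic_taylor_rem_sum[of 1] by simp
  from pole_lemma_open[OF this open_halfspace_Re_gt, of 1]
  show "(\<lambda>s. if s = 1 then deriv (taylor_rem_sum 1) 1 else taylor_rem_sum 1 s / (s - 1))
          holomorphic_on {s. Re s > - real 0}"
    unfolding taylor_rem_sum_1_at_1 diff_zero by simp
  fix s :: complex assume s: "Re s > 1"
  then have "s \<noteq> 1" by auto
  with taylor_rem_sum_eq[OF s, of 1]
  show "(if s = 1 then deriv (taylor_rem_sum 1) 1 else taylor_rem_sum 1 s / (s - 1)) + 1 / (s - 1)
      = dirichlet_zeta s"
    by (simp add: field_simps)
qed

lemma gbinomial_div_shift:
  fixes s :: complex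
  assumes "j \<ge> 2" "s + of_nat j - 2 \<noteq> 0"
  shows "((1 - s) gchoose j) / (s + of_nat j - 2) = - ((1 - s) gchoose (j - 1)) / of_nat j"
proof -
  obtain k where k: "j = Suc k" using assms by (cases j) auto
  have "(1 - s) * ((1 - s) gchoose k)
      = of_nat k * ((1 - s) gchoose k) + of_nat (Suc k) * ((1 - s) gchoose (Suc k))"
    by (rule gbinomial_mult_1)
  then have "of_nat (Suc k) * ((1 - s) gchoose (Suc k)) = - (s + of_nat (Suc k) - 2) * ((1 - s) gchoose k)"
    by (simp add: algebra_simps)
  then show ?thesis using assms k by (simp add: field_simps del: of_nat_Suc)
qed

text \<open>For Re s > 1, taylor_rem_sum_eq reads
  (s - 1) \<zeta>(s) = 1 + \<Sum>j=2..K binom(1-s, j) \<zeta>(s+j-1) + taylor_rem_sum K s.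
  Writing \<zeta>(w) = E(w) + 1/(w-1) in the shifted terms and simplifying with gbinomial_div_shift
  expresses \<zeta> through E at points further right.\<close>
definition zeta_from_shifts :: "nat \<Rightarrow> (complex \<Rightarrow> complex) \<Rightarrow> complex \<Rightarrow> complex" where
  "zeta_from_shifts K E s =
     (1 + (\<Sum>j\<in>{2..K}. ((1 - s) gchoose j) * E (s + of_nat j - 1) - ((1 - s) gchoose (j - 1)) / of_nat j)
        + taylor_rem_sum K s) / (s - 1)"

lemma zeta_from_shifts_eq:
  assumes K: "K \<ge> 1" and s: "Re s > 1"
    and E: "\<And>w. Re w > 1 \<Longrightarrow> E w + 1 / (w - 1) = dirichlet_zeta w"
  shows "zeta_from_shifts K E s = dirichlet_zeta s"
proof -
  have shift: "((1 - s) gchoose j) * E (s + of_nat j - 1) - ((1 - s) gchoose (j - 1)) / of_nat j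
      = ((1 - s) gchoose j) * dirichlet_zeta (s + of_nat j - 1)" if "j \<in> {2..K}" for j
  proof -
    have j: "j \<ge> 2" using that by auto
    have nz: "s + of_nat j - 2 \<noteq> 0"
      using s j by (auto simp: complex_eq_iff)
    have "Re (s + of_nat j - 1) > 1" using s j by simp
    from E[OF this] have "dirichlet_zeta (s + of_nat j - 1) = E (s + of_nat j - 1) + 1 / (s + of_nat j - 2)"
      by (simp add: algebra_simps)
    then have "((1 - s) gchoose j) * dirichlet_zeta (s + of_nat j - 1)
        = ((1 - s) gchoose j) * E (s + of_nat j - 1) + ((1 - s) gchoose j) / (s + of_nat j - 2)"
      by (simp add: algebra_simps)
    then show ?thesis using gbinomial_div_shift[OF j nz] by simp
  qed
  have "{1..K} = insert 1 {2..K}" using K by auto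
  then have "(\<Sum>j\<in>{1..K}. ((1 - s) gchoose j) * dirichlet_zeta (s + of_nat j - 1))
      = (1 - s) * dirichlet_zeta s + (\<Sum>j\<in>{2..K}. ((1 - s) gchoose j) * dirichlet_zeta (s + of_nat j - 1))"
    by simp
  moreover have "s - 1 \<noteq> 0" using s by auto
  moreover have "(\<Sum>j\<in>{2..K}. ((1 - s) gchoose j) * E (s + of_nat j - 1) - ((1 - s) gchoose (j - 1)) / of_nat j)
      = (\<Sum>j\<in>{2..K}. ((1 - s) gchoose j) * dirichlet_zeta (s + of_nat j - 1))"
    by (rule sum.cong[OF refl shift])
  ultimately show ?thesis
    unfolding zeta_from_shifts_def taylor_rem_sum_eq[OF s] by (simp add: field_simps)
qed

lemma holomorphic_zeta_from_shifts:
  assumes E: "E holomorphic_on {s. Re s > - real K}"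
  shows "(\<lambda>s. zeta_from_shifts (K + 2) E s - 1 / (s - 1)) holomorphic_on {s. Re s > - real K - 1} - {1}"
proof -
  have "taylor_rem_sum (K + 2) holomorphic_on {s. Re s > - real K - 1} - {1}"
    by (rule holomorphic_on_subset[OF holomorphic_taylor_rem_sum]) auto
  moreover have "(\<lambda>s. E (s + of_nat j - 1)) holomorphic_on {s. Re s > - real K - 1} - {1}"
    if "j \<in> {2..K+2}" for j
  proof -
    have "(E \<circ> (\<lambda>s. s + of_nat j - 1)) holomorphic_on {s. Re s > - real K - 1} - {1}"
      using that by (intro holomorphic_on_compose_gen[OF _ E]) (auto intro!: holomorphic_intros)
    then show ?thesis by (simp add: o_def)
  qed
  ultimately show ?thesis
    unfolding zeta_from_shifts_def by (intro holomorphic_intros) auto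
qed

lemma is_zeta_regular_part_Suc:
  assumes "is_zeta_regular_part K E"
  shows "\<exists>E'. is_zeta_regular_part (Suc K) E'"
proof -
  have E: "E holomorphic_on {s. Re s > - real K}"
    and E_eq: "\<And>s. Re s > 1 \<Longrightarrow> E s + 1 / (s - 1) = dirichlet_zeta s"
    using assms by (auto simp: is_zeta_regular_part_def)
  define h where "h s = zeta_from_shifts (K + 2) E s - 1 / (s - 1)" for s
  have h: "h holomorphic_on {s. Re s > - real K - 1} - {1}"
    unfolding h_def using holomorphic_zeta_from_shifts[OF E] .
  have h_eq: "E s = h s" if "s \<in> {s. Re s > - real K}" "s \<in> {s. Re s > - real K - 1} - {1}" for s
  proof (rule analytic_continuation_open[of "{s. Re s > 1}" "{s. Re s > - real K} - {1}" E h])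
    show "E holomorphic_on {s. Re s > - real K} - {1}" using E by (rule holomorphic_on_subset) auto
    show "h holomorphic_on {s. Re s > - real K} - {1}" using h by (rule holomorphic_on_subset) auto
    show "E z = h z" if "z \<in> {s. Re s > 1}" for z
      using that zeta_from_shifts_eq[OF _ _ E_eq, of "K + 2" z] E_eq[of z] by (simp add: h_def eq_diff_eq)
  qed (use that in \<open>auto simp: open_halfspace_Re_gt connected_halfplane_minus_point
                          intro!: open_Diff exI[of _ 2]\<close>)
  define E' where "E' s = (if s \<in> {s. Re s > - real K} then E s else h s)" for s
  have "E' holomorphic_on {s. Re s > - real K} \<union> ({s. Re s > - real K - 1} - {1})"
    unfolding E'_def[abs_def] using E h h_eq
    by (intro holomorphic_on_If_Un) (auto simp: open_halfspace_Re_gt intro!: open_Diff)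
  moreover have "{s. Re s > - real K} \<union> ({s. Re s > - real K - 1} - {1}) = {s. Re s > - real (Suc K)}"
    by auto
  ultimately have "is_zeta_regular_part (Suc K) E'"
    using E_eq unfolding is_zeta_regular_part_def by (auto simp: E'_def)
  then show ?thesis by blast
qed

lemma is_zeta_regular_part_exists: "\<exists>E. is_zeta_regular_part K E"
  by (induction K) (use is_zeta_regular_part_0 is_zeta_regular_part_Suc in blast)+

lemma is_zeta_regular_part_mono:
  "is_zeta_regular_part K E \<Longrightarrow> K' \<le> K \<Longrightarrow> is_zeta_regular_part K' E"
  unfolding is_zeta_regular_part_def by (auto elim!: holomorphic_on_subset)

lemma is_zeta_regular_part_unique:
  assumes "is_zeta_regular_part K E1" "is_zeta_regular_part K E2" "Re s > - real K"
  shows "E1 s = E2 s"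
proof (rule analytic_continuation_open[of "{s. Re s > 1}" "{s. Re s > - real K}" E1 E2])
  show "connected {s::complex. Re s > - real K}"
    by (simp add: convex_connected convex_halfspace_Re_gt)
  show "E1 z = E2 z" if "z \<in> {s. Re s > 1}" for z
    using that assms(1,2) unfolding is_zeta_regular_part_def by (metis add_right_cancel mem_Collect_eq)
qed (use assms in \<open>auto simp: is_zeta_regular_part_def open_halfspace_Re_gt intro!: exI[of _ 2]\<close>)

text \<open>The regular parts of all strips agree on overlaps and glue to an entire function.\<close>
lemma riemann_zeta_exists:
  "\<exists>f. f holomorphic_on (- {1}) \<and> (\<forall>s. 1 < Re s \<longrightarrow> f s = (\<Sum>n. 1 / (of_nat (Suc n)) powr s))"
proof -
  obtain E where E: "\<And>K. is_zeta_regular_part K (E K)"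
    using is_zeta_regular_part_exists by metis
  define F where "F s = E (nat \<lceil>- Re s\<rceil> + 1) s" for s
  have F_eq: "F s = E K s" if "Re s > - real K" for s K
  proof -
    define M where "M = min (nat \<lceil>- Re s\<rceil> + 1) K"
    have "Re s > - real M" using that unfolding M_def by (simp add: min_def) linarith
    then show ?thesis
      unfolding F_def M_def
      by (intro is_zeta_regular_part_unique[OF is_zeta_regular_part_mono[OF E]
                  is_zeta_regular_part_mono[OF E]]) auto
  qed
  have "F holomorphic_on {s. Re s > - real K}" for K
    using E[of K] F_eq by (auto simp: is_zeta_regular_part_def elim!: holomorphic_transform)
  then have "F holomorphic_on (\<Union>K. {s. Re s > - real K})"
    by (intro holomorphic_on_UN_open) (auto simp: open_halfspace_Re_gt)
  moreover have "(\<Union>K. {s. Re s > - real K}) = UNIV"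
    using reals_Archimedean2 by (auto simp: minus_less_iff)
  ultimately have F: "F holomorphic_on UNIV" by simp
  show ?thesis
  proof (intro exI conjI allI impI)
    show "(\<lambda>s. F s + 1 / (s - 1)) holomorphic_on (- {1})"
      by (intro holomorphic_intros holomorphic_on_subset[OF F]) auto
    show "F s + 1 / (s - 1) = (\<Sum>n. 1 / of_nat (Suc n) powr s)" if "1 < Re s" for s
      using that E[of 0] F_eq[where K = 0] unfolding is_zeta_regular_part_def dirichlet_zeta_def by simp
  qed
qed

lemma holomorphic_riemann_zeta: "riemann_zeta holomorphic_on (- {1})"
  and riemann_zeta_eq_dirichlet_zeta: "1 < Re s \<Longrightarrow> riemann_zeta s = dirichlet_zeta s"
  using someI_ex[OF riemann_zeta_exists] unfolding riemann_zeta_def[symmetric] dirichlet_zeta_def by auto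

lemma riemann_zeta_eq_taylor_rem_sum_1:
  assumes "Re s > 0" "s \<noteq> 1"
  shows "riemann_zeta s = (1 + taylor_rem_sum 1 s) / (s - 1)"
proof (rule analytic_continuation_open[of "{s. Re s > 1}" "{s. Re s > 0} - {1}" riemann_zeta])
  show "riemann_zeta holomorphic_on {s. Re s > 0} - {1}"
    by (rule holomorphic_on_subset[OF holomorphic_riemann_zeta]) auto
  have "taylor_rem_sum 1 holomorphic_on {s. Re s > 0}"
    using holomorphic_taylor_rem_sum[of 1] by simp
  then show "(\<lambda>s. (1 + taylor_rem_sum 1 s) / (s - 1)) holomorphic_on {s. Re s > 0} - {1}"
    by (intro holomorphic_intros) (auto elim!: holomorphic_on_subset)
  fix z :: complex assume z: "z \<in> {s. Re s > 1}"
  then have "z \<noteq> 1" by auto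
  with z show "riemann_zeta z = (1 + taylor_rem_sum 1 z) / (z - 1)"
    using taylor_rem_sum_eq[of z 1] riemann_zeta_eq_dirichlet_zeta[of z] by (simp add: field_simps)
qed (use assms in \<open>auto simp: open_halfspace_Re_gt connected_halfplane_minus_point
                         intro!: open_Diff exI[of _ 2]\<close>)

lemma norm_taylor_rem_1_le:
  "norm (taylor_rem 1 n s) \<le> (norm (1 - s) + 1)^2 * 2 powr (\<bar>1 - Re s\<bar> + 2) * real (Suc n) powr (- Re s - 1)"
  using norm_taylor_rem_le[of 1 n s] by (simp add: add.commute power2_eq_square)

lemma summable_taylor_rem_1:
  assumes "Re s > 0"
  shows "summable (\<lambda>n. taylor_rem 1 n s)"
proof (rule summable_norm_cancel, rule summable_comparison_test[OF _ summable_mult[OF summable_real_Suc_powr]])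
  show "\<exists>N. \<forall>n\<ge>N. norm (norm (taylor_rem 1 n s))
      \<le> (norm (1 - s) + 1)^2 * 2 powr (\<bar>1 - Re s\<bar> + 2) * real (Suc n) powr (- Re s - 1)"
    using norm_taylor_rem_1_le by auto
qed (use assms in simp)

lemma riemann_zeta_eq_partial_sum_plus_tail:
  assumes s: "Re s > 0" "s \<noteq> 1"
  shows "riemann_zeta s = (\<Sum>n<N. of_nat (Suc n) powr (- s)) + of_nat (Suc N) powr (1 - s) / (s - 1)
           + (\<Sum>n. taylor_rem 1 (n + N) s) / (s - 1)"
proof -
  define g where "g n = (of_nat (Suc n) :: complex) powr (1 - s)" for n
  define S where "S = (\<Sum>n<N. of_nat (Suc n) powr (- s) :: complex)"
  define R where "R = (\<Sum>n. taylor_rem 1 (n + N) s)"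
  have "taylor_rem 1 n s = (g (Suc n) - g n) - (1 - s) * of_nat (Suc n) powr (- s)" for n
    using taylor_rem_eq[of 1 n s] by (simp add: g_def)
  then have "(\<Sum>n<N. taylor_rem 1 n s) = (\<Sum>n<N. g (Suc n) - g n) - (1 - s) * S"
    by (simp add: sum_subtractf sum_distrib_left S_def)
  also have "(\<Sum>n<N. g (Suc n) - g n) = g N - 1"
    using sum_lessThan_telescope[of g N] by (simp add: g_def)
  finally have initial: "(\<Sum>n<N. taylor_rem 1 n s) = g N - 1 - (1 - s) * S" .
  have "taylor_rem_sum 1 s = R + (\<Sum>n<N. taylor_rem 1 n s)"
    unfolding taylor_rem_sum_def R_def by (rule suminf_split_initial_segment[OF summable_taylor_rem_1[OF s(1)]])
  then have "1 + taylor_rem_sum 1 s = g N + (s - 1) * S + R"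
    unfolding initial by (simp add: algebra_simps)
  moreover have "s - 1 \<noteq> 0" using s by simp
  ultimately show ?thesis
    unfolding riemann_zeta_eq_taylor_rem_sum_1[OF s] by (simp add: S_def R_def g_def add_divide_distrib)
qed

lemma harm_le_one_plus_ln: "N \<ge> 1 \<Longrightarrow> (harm N :: real) \<le> 1 + ln (real N)"
proof -
  assume "N \<ge> 1"
  then obtain M where M: "N = Suc M" by (cases N) auto
  have "harm (Suc M) - ln (real (Suc M)) \<le> harm (Suc 0) - ln (real (Suc 0))"
    using decseq_harm_diff_ln[unfolded decseq_def, rule_format, of 0 M] by simp
  then show ?thesis using M by (simp add: harm_expand)
qed

lemma norm_zeta_partial_sum_le:
  assumes "N \<ge> 1" and bound: "\<And>x. 1 \<le> x \<Longrightarrow> x \<le> real N \<Longrightarrow> x powr (1 - Re s) \<le> B"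
  shows "norm (\<Sum>n<N. of_nat (Suc n) powr (- s)) \<le> B * (1 + ln (real N))"
proof -
  have "norm (\<Sum>n<N. of_nat (Suc n) powr (- s)) \<le> (\<Sum>n<N. norm (of_nat (Suc n) powr (- s)))"
    by (rule norm_sum)
  also have "\<dots> \<le> (\<Sum>n<N. B * inverse (real (Suc n)))"
  proof (rule sum_mono)
    fix n assume "n \<in> {..<N}"
    then have "real (Suc n) powr (1 - Re s) \<le> B" by (intro bound) auto
    moreover have "norm (of_nat (Suc n) powr (- s)) = real (Suc n) powr (1 - Re s) * inverse (real (Suc n))"
      using norm_powr_real_powr[of "of_nat (Suc n)" "- s"] by (simp add: powr_diff powr_minus divide_inverse)
    ultimately show "norm (of_nat (Suc n) powr (- s)) \<le> B * inverse (real (Suc n))"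
      by (simp add: mult_right_mono)
  qed
  also have "\<dots> = B * harm N" by (simp add: harm_altdef sum_distrib_left)
  also have "\<dots> \<le> B * (1 + ln (real N))"
  proof -
    have "0 \<le> B" using bound[of 1] assms(1) by simp
    then show ?thesis using harm_le_one_plus_ln[OF assms(1)] by (rule mult_left_mono[rotated])
  qed
  finally show ?thesis .
qed

lemma inverse_cube_le_telescope:
  fixes a b :: real
  assumes a: "0 < a" and ab: "a \<le> b" and e: "b^2 = a^2 + 1"
  shows "1 / (b^2 * b) \<le> 2 * (1 / a - 1 / b)"
proof -
  have b: "0 < b" using a ab by simp
  have "(b - a) * (a + b) = 1" using e by (simp add: algebra_simps power2_eq_square)
  then have ba: "b - a = 1 / (a + b)" using a b by (simp add: field_simps)
  have "2 * (1 / a - 1 / b) = 2 * ((b - a) / (a * b))" using a b by (simp add: field_simps)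
  also have "\<dots> = 2 / (a * b * (a + b))" unfolding ba using a b by (simp add: field_simps)
  finally have r: "2 * (1 / a - 1 / b) = 2 / (a * b * (a + b))" .
  have "a * b * (a + b) \<le> b * b * (2 * b)"
    using a b ab by (intro mult_mono) auto
  then have "2 / (b * b * (2 * b)) \<le> 2 / (a * b * (a + b))" using a b
    by (intro frac_le) auto
  moreover have "1 / (b^2 * b) = 2 / (b * b * (2 * b))" using b by (simp add: power2_eq_square)
  ultimately have "1 / (b^2 * b) \<le> 2 / (a * b * (a + b))" by linarith
  then show ?thesis using r by simp
qed

lemma powr_minus_three_halves_le:
  assumes "m \<ge> (2::real)"
  shows "m powr (-3/2) \<le> 2 * (1 / sqrt (m - 1) - 1 / sqrt m)"
proof -
  have "m powr (-3/2) = 1 / ((sqrt m)^2 * sqrt m)"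
  proof -
    have "m powr (-3/2) = inverse (m powr (3/2))" by (simp add: powr_minus[symmetric])
    also have "m powr (3/2) = m powr 1 * m powr (1/2)"
    proof -
      have e: "(3/2::real) = 1 + 1/2" by simp
      show ?thesis by (subst e, subst powr_add) (rule refl)
    qed
    also have "\<dots> = (sqrt m)^2 * sqrt m" using assms by (simp add: powr_half_sqrt real_sqrt_pow2)
    finally show ?thesis by (simp only: inverse_eq_divide)
  qed
  also have "\<dots> \<le> 2 * (1 / sqrt (m - 1) - 1 / sqrt m)"
    using assms by (intro inverse_cube_le_telescope) auto
  finally show ?thesis .
qed

lemma sum_powr_tail_le:
  assumes N: "N \<ge> 1" and \<sigma>: "\<sigma> \<ge> 1/2"
  shows "summable (\<lambda>n. real (n + N + 1) powr (- \<sigma> - 1))"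
    and "(\<Sum>n. real (n + N + 1) powr (- \<sigma> - 1)) \<le> 2 * real (N + 1) powr (1/2 - \<sigma>) / sqrt (real N)"
proof -
  define c where "c = real (N + 1) powr (1/2 - \<sigma>)"
  have c: "c \<ge> 0" by (simp add: c_def)
  define f where "f n = 1 / sqrt (real (n + N))" for n
  have "filterlim (\<lambda>n. real (n + N)) at_top sequentially"
    by (intro filterlim_compose[OF filterlim_real_sequentially]) (rule filterlim_add_const_nat_at_top)
  then have "filterlim (\<lambda>n. sqrt (real (n + N))) at_top sequentially"
    by (rule filterlim_compose[OF sqrt_at_top])
  then have f: "f \<longlonglongrightarrow> 0"
    unfolding f_def by (intro tendsto_divide_0[OF tendsto_const] filterlim_at_top_imp_at_infinity)
  have telescope: "(\<lambda>n. c * (2 * (f n - f (Suc n)))) sums (c * (2 * (f 0 - 0)))"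
    by (intro sums_mult telescope_sums'[OF f])
  have term_le: "real (n + N + 1) powr (- \<sigma> - 1) \<le> c * (2 * (f n - f (Suc n)))" for n
  proof -
    have e: "- \<sigma> - 1 = (-3/2) + (1/2 - \<sigma>)" by simp
    have "real (n + N + 1) powr (- \<sigma> - 1) = real (n + N + 1) powr (-3/2) * real (n + N + 1) powr (1/2 - \<sigma>)"
      by (subst e, subst powr_add) (rule refl)
    also have "\<dots> \<le> real (n + N + 1) powr (-3/2) * c"
      unfolding c_def using \<sigma> by (intro mult_left_mono powr_mono2') auto
    also have "real (n + N + 1) powr (-3/2) \<le> 2 * (f n - f (Suc n))"
    proof -
      have "real (n + N + 1) powr (-3/2) \<le> 2 * (1 / sqrt (real (n + N + 1) - 1) - 1 / sqrt (real (n + N + 1)))"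
        using N by (intro powr_minus_three_halves_le) auto
      then show ?thesis by (simp add: f_def)
    qed
    then have "real (n + N + 1) powr (-3/2) * c \<le> 2 * (f n - f (Suc n)) * c" using c by (rule mult_right_mono)
    finally show ?thesis by (simp add: algebra_simps)
  qed
  show summable: "summable (\<lambda>n. real (n + N + 1) powr (- \<sigma> - 1))"
    by (rule summable_comparison_test[OF _ sums_summable[OF telescope]]) (use term_le in auto)
  have "(\<Sum>n. real (n + N + 1) powr (- \<sigma> - 1)) \<le> c * (2 * (f 0 - 0))"
    using suminf_le[OF term_le summable sums_summable[OF telescope]] sums_unique[OF telescope] by simp
  then show "(\<Sum>n. real (n + N + 1) powr (- \<sigma> - 1)) \<le> 2 * real (N + 1) powr (1/2 - \<sigma>) / sqrt (real N)"
    by (simp add: c_def f_def mult.commute)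
qed

lemma powr_one_half_minus_div_sqrt_le:
  assumes N: "N \<ge> 1" and B: "real (N + 1) powr (1 - \<sigma>) \<le> B"
  shows "2 * real (N + 1) powr (1/2 - \<sigma>) / sqrt (real N) \<le> 2 * B / real N"
proof -
  have e: "1/2 - \<sigma> = (1 - \<sigma>) + (-(1/2))" by simp
  have "real (N + 1) powr (1/2 - \<sigma>) = real (N + 1) powr (1 - \<sigma>) * real (N + 1) powr (-(1/2))"
    by (subst e, subst powr_add) (rule refl)
  also have "\<dots> \<le> B * real (N + 1) powr (-(1/2))" using B by (intro mult_right_mono) auto
  also have "real (N + 1) powr (-(1/2)) = 1 / sqrt (real (N + 1))"
  proof -
    have "real (N + 1) powr (-(1/2)) = inverse (real (N + 1) powr (1/2))" by (rule powr_minus)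
    also have "real (N + 1) powr (1/2) = sqrt (real (N + 1))" by (rule powr_half_sqrt) simp
    finally show ?thesis by (simp only: inverse_eq_divide)
  qed
  finally have a: "real (N + 1) powr (1/2 - \<sigma>) \<le> B / sqrt (real (N + 1))" by simp
  have b: "sqrt (real (N + 1)) * sqrt (real N) \<ge> real N"
  proof -
    have "sqrt (real N) * sqrt (real N) \<le> sqrt (real (N + 1)) * sqrt (real N)"
      by (intro mult_right_mono) auto
    then show ?thesis by simp
  qed
  have B0: "0 \<le> B" using B powr_ge_zero[of "real (N + 1)" "1 - \<sigma>"] by linarith
  have Np: "real N > 0" using N by simp
  have "2 * real (N + 1) powr (1/2 - \<sigma>) / sqrt (real N) \<le> 2 * (B / sqrt (real (N + 1))) / sqrt (real N)"
    using a Np by (intro divide_right_mono mult_left_mono) auto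
  also have "\<dots> = 2 * B / (sqrt (real (N + 1)) * sqrt (real N))" by simp
  also have "\<dots> \<le> 2 * B / real N" using b Np B0 by (intro divide_left_mono) auto
  finally show ?thesis .
qed

lemma norm_taylor_rem_1_tail_le:
  assumes N: "N \<ge> 1" and s: "1/2 \<le> Re s" "Re s \<le> 3/2"
    and B: "real (N + 1) powr (1 - Re s) \<le> B"
  shows "norm (\<Sum>n. taylor_rem 1 (n + N) s) \<le> 8 * (norm (s - 1) + 1)^2 * (2 * B / real N)"
proof -
  define C where "C = 8 * (norm (s - 1) + 1)^2"
  have "2 powr (\<bar>1 - Re s\<bar> + 2) \<le> 2 powr 3" using s by (intro powr_mono) auto
  then have "(norm (1 - s) + 1)^2 * 2 powr (\<bar>1 - Re s\<bar> + 2) \<le> (norm (1 - s) + 1)^2 * 8"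
    by (intro mult_left_mono) auto
  also have "\<dots> = C" by (simp add: C_def norm_minus_commute)
  finally have coeff: "(norm (1 - s) + 1)^2 * 2 powr (\<bar>1 - Re s\<bar> + 2) \<le> C" .
  have term_le: "norm (taylor_rem 1 (n + N) s) \<le> C * real (n + N + 1) powr (- Re s - 1)" for n
    using order_trans[OF norm_taylor_rem_1_le[of "n + N" s] mult_right_mono[OF coeff]] by (simp add: add_ac)
  note tail = sum_powr_tail_le[OF N s(1)]
  have summable: "summable (\<lambda>n. C * real (n + N + 1) powr (- Re s - 1))"
    using tail(1) by (rule summable_mult)
  have "norm (\<Sum>n. taylor_rem 1 (n + N) s) \<le> (\<Sum>n. norm (taylor_rem 1 (n + N) s))"
    by (rule summable_norm) (rule summable_comparison_test[OF _ summable], use term_le in auto)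
  also have "\<dots> \<le> (\<Sum>n. C * real (n + N + 1) powr (- Re s - 1))"
    by (rule suminf_le[OF term_le _ summable])
       (rule summable_comparison_test[OF _ summable], use term_le in auto)
  also have "\<dots> = C * (\<Sum>n. real (n + N + 1) powr (- Re s - 1))"
    using tail(1) by (rule suminf_mult)
  also have "\<dots> \<le> C * (2 * B / real N)"
    using order_trans[OF tail(2) powr_one_half_minus_div_sqrt_le[OF N B]]
    by (intro mult_left_mono) (auto simp: C_def)
  finally show ?thesis by (simp add: C_def)
qed

lemma ln_ge_two: "t \<ge> 16 \<Longrightarrow> ln t \<ge> (2::real)"
proof -
  assume t: "t \<ge> 16"
  have "exp 2 = exp (1::real) * exp 1" by (simp add: exp_add[symmetric])
  also have "\<dots> \<le> 3 * 3" using exp_le by (intro mult_mono) auto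
  finally have "exp 2 \<le> t" using t by simp
  then show ?thesis using t by (simp add: ln_ge_iff)
qed

lemma ln_le_two_ln: "2 \<le> T \<Longrightarrow> 0 < t \<Longrightarrow> t \<le> T + 1 \<Longrightarrow> ln t \<le> 2 * ln (T::real)"
proof -
  assume T: "2 \<le> T" and t: "0 < t" "t \<le> T + 1"
  have "2 * T \<le> T * T" using T by (intro mult_right_mono) auto
  then have "T + 1 \<le> T * T" using T by linarith
  then have "ln t \<le> ln (T * T)" using t T by (subst ln_le_cancel_iff) auto
  also have "\<dots> = 2 * ln T" using T by (simp add: ln_mult)
  finally show ?thesis .
qed

lemma norm_riemann_zeta_le_of_powr_bound:
  assumes N: "N \<ge> 1" and s: "1/2 \<le> Re s" "Re s \<le> 3/2" "1 \<le> norm (s - 1)"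
    and B: "\<And>x. 1 \<le> x \<Longrightarrow> x \<le> real (N + 1) \<Longrightarrow> x powr (1 - Re s) \<le> B"
  shows "norm (riemann_zeta s) \<le> B * (1 + ln (real N)) + B + 64 * B * norm (s - 1) / real N"
proof -
  define x where "x = norm (s - 1)"
  have "s \<noteq> 1" "Re s > 0" using s by auto
  note decomposition = riemann_zeta_eq_partial_sum_plus_tail[OF \<open>Re s > 0\<close> \<open>s \<noteq> 1\<close>, of N]
  have partial: "norm (\<Sum>n<N. of_nat (Suc n) powr (- s)) \<le> B * (1 + ln (real N))"
    using N B by (intro norm_zeta_partial_sum_le) auto
  have "norm (of_nat (Suc N) powr (1 - s) :: complex) = real (Suc N) powr (1 - Re s)"
    using norm_powr_real_powr[of "of_nat (Suc N)" "1 - s"] by simp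
  also have "\<dots> \<le> B" using B by simp
  finally have "norm (of_nat (Suc N) powr (1 - s) :: complex) / norm (s - 1) \<le> B / 1"
    using s(3) B[of 1] by (intro frac_le) auto
  then have boundary: "norm (of_nat (Suc N) powr (1 - s) / (s - 1)) \<le> B"
    by (simp add: norm_divide)
  have "norm (\<Sum>n. taylor_rem 1 (n + N) s) \<le> 8 * (x + 1)^2 * (2 * B / real N)"
    unfolding x_def using N s B[of "real (N + 1)"] by (intro norm_taylor_rem_1_tail_le) auto
  also have "\<dots> \<le> 8 * (2 * x)^2 * (2 * B / real N)"
    using s(3) B[of 1] N by (intro mult_right_mono mult_left_mono power_mono) (auto simp: x_def)
  finally have tail: "norm ((\<Sum>n. taylor_rem 1 (n + N) s) / (s - 1)) \<le> 64 * B * x / real N"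
    using s(3) by (simp add: norm_divide x_def[symmetric] divide_le_eq power2_eq_square field_simps)
  show ?thesis
    unfolding decomposition x_def[symmetric] using partial boundary tail
    by (intro order_trans[OF norm_triangle_ineq] add_mono order_trans[OF norm_triangle_ineq]) auto
qed

lemma norm_riemann_zeta_near_line_le:
  assumes t: "t \<ge> 16" and s: "norm (s - Complex 1 t) \<le> 1 / ln t"
  shows "norm (riemann_zeta s) \<le> 400 * ln t"
proof -
  have lt: "ln t \<ge> 2" using ln_ge_two[OF t] .
  have re: "\<bar>Re s - 1\<bar> \<le> 1 / ln t" and im: "\<bar>Im s - t\<bar> \<le> 1 / ln t"
    using abs_Re_le_cmod[of "s - Complex 1 t"] abs_Im_le_cmod[of "s - Complex 1 t"] s by auto
  have inv_ln: "1 / ln t \<le> 1/2" using lt by (simp add: field_simps)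
  have \<sigma>: "1/2 \<le> Re s" "Re s \<le> 3/2" using re inv_ln by (auto simp: abs_le_iff)
  text \<open>Since 1 - Re s \<le> 1 / ln t, the factor x^(1 - Re s) stays below e up to x = t.\<close>
  have small_powr: "x powr (1 - Re s) \<le> exp 1" if x: "1 \<le> x" "x \<le> t" for x
  proof -
    have "x powr (1 - Re s) \<le> x powr (1 / ln t)" using x re by (intro powr_mono) auto
    also have "\<dots> \<le> t powr (1 / ln t)" using x lt by (intro powr_mono2) auto
    also have "t powr (1 / ln t) = exp 1" using t lt by (simp add: powr_def)
    finally show ?thesis .
  qed
  define N where "N = nat \<lfloor>t\<rfloor> - 1"
  have N_eq: "real (N + 1) = real_of_int \<lfloor>t\<rfloor>" using t by (simp add: N_def of_nat_diff)
  have N: "real (N + 1) \<le> t" "t - 2 \<le> real N" "N \<ge> 1"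
    using N_eq t by linarith+
  have s_minus_1: "1 \<le> norm (s - 1)" "norm (s - 1) \<le> t + 1"
  proof -
    have "\<bar>Im (s - 1)\<bar> \<ge> t - 1/2" using im inv_ln by (auto simp: abs_le_iff)
    then show "1 \<le> norm (s - 1)" using abs_Im_le_cmod[of "s - 1"] t by linarith
    have "norm (s - 1) \<le> norm (s - Complex 1 t) + norm (Complex 1 t - 1)"
      using norm_triangle_ineq[of "s - Complex 1 t" "Complex 1 t - 1"] by simp
    also have "norm (Complex 1 t - 1) = t" using t by (simp add: cmod_def)
    finally show "norm (s - 1) \<le> t + 1" using s inv_ln by linarith
  qed
  have "norm (riemann_zeta s) \<le> exp 1 * (1 + ln (real N)) + exp 1 + 64 * exp 1 * norm (s - 1) / real N"
    using \<sigma> N s_minus_1 small_powr by (intro norm_riemann_zeta_le_of_powr_bound) auto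
  also have "\<dots> \<le> exp 1 * (1 + ln t) + exp 1 + 64 * exp 1 * (2 * real N) / real N"
    using N s_minus_1 t by (intro add_mono mult_left_mono divide_right_mono) auto
  also have "\<dots> = exp 1 * (1 + ln t) + exp 1 + 128 * exp 1" using N by simp
  also have "\<dots> \<le> 3 * (1 + ln t) + 3 + 128 * 3"
    using exp_le lt by (intro add_mono mult_right_mono) auto
  also have "\<dots> \<le> 400 * ln t" using lt by simp
  finally show ?thesis .
qed

lemma holomorphic_zeta_deriv: "zeta_deriv m holomorphic_on (- {1})"
  unfolding zeta_deriv_def by (intro holomorphic_higher_deriv holomorphic_riemann_zeta) auto

lemma has_field_derivative_zeta_deriv:
  "z \<noteq> 1 \<Longrightarrow> (zeta_deriv m has_field_derivative zeta_deriv (Suc m) z) (at z within S)"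
  unfolding zeta_deriv_def funpow.simps o_def
  by (rule holomorphic_derivI[OF holomorphic_zeta_deriv[unfolded zeta_deriv_def]]) auto

lemma continuous_on_zeta_deriv_line: "continuous_on {1..} (\<lambda>t. zeta_deriv m (Complex 1 t))"
proof (rule continuous_on_compose2[OF holomorphic_on_imp_continuous_on[OF holomorphic_zeta_deriv]])
  show "continuous_on {1..} (Complex 1)" by (intro continuous_intros)
qed (auto simp: complex_eq_iff)

text \<open>Cauchy's estimate on the disc of radius 1 / ln t around 1 + it, where zeta is O(ln t).\<close>
lemma norm_zeta_deriv_Suc_on_line_le:
  assumes t: "t \<ge> 16"
  shows "norm (zeta_deriv (Suc m) (Complex 1 t)) \<le> 401 * fact (Suc m) * ln t ^ (m + 2)"
proof -
  have lt: "ln t \<ge> 2" by (rule ln_ge_two[OF t])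
  define r where "r = 1 / ln t"
  have r: "r > 0" "r \<le> 1/2" using lt by (auto simp: r_def field_simps)
  have disc: "cball (Complex 1 t) r \<subseteq> - {1}"
  proof
    fix w assume "w \<in> cball (Complex 1 t) r"
    then have "\<bar>Im (Complex 1 t - w)\<bar> \<le> r" using abs_Im_le_cmod[of "Complex 1 t - w"] by (simp add: dist_norm)
    then have "Im w \<noteq> 0" using r t by (auto simp: abs_le_iff)
    then show "w \<in> - {1}" by auto
  qed
  have "norm ((deriv ^^ Suc m) riemann_zeta (Complex 1 t)) \<le> fact (Suc m) * (400 * ln t + 1) / r ^ Suc m"
  proof (rule Cauchy_higher_deriv_bound[where y = 0])
    show "riemann_zeta holomorphic_on ball (Complex 1 t) r"
      using holomorphic_riemann_zeta disc ball_subset_cball holomorphic_on_subset by blast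
    show "continuous_on (cball (Complex 1 t) r) riemann_zeta"
      using holomorphic_riemann_zeta disc holomorphic_on_imp_continuous_on holomorphic_on_subset by blast
    fix w assume "w \<in> ball (Complex 1 t) r"
    then have "norm (w - Complex 1 t) \<le> 1 / ln t" by (simp add: dist_norm r_def norm_minus_commute)
    then show "riemann_zeta w \<in> ball 0 (400 * ln t + 1)"
      using norm_riemann_zeta_near_line_le[OF t] by fastforce
  qed (use r in auto)
  also have "\<dots> = fact (Suc m) * (400 * ln t + 1) * ln t ^ Suc m"
    by (simp add: r_def power_one_over)
  also have "\<dots> \<le> fact (Suc m) * (401 * ln t) * ln t ^ Suc m"
    using lt by (intro mult_right_mono mult_left_mono) auto
  finally show ?thesis by (simp add: zeta_deriv_def power_Suc mult_ac)
qed

lemma closed_segment_vertical: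
  assumes "z \<in> closed_segment (Complex x a) (Complex x b)"
  shows "z = Complex x (Im z)" "min a b \<le> Im z" "Im z \<le> max a b"
proof -
  obtain u where u: "0 \<le> u" "u \<le> 1" "z = (1 - u) *\<^sub>R Complex x a + u *\<^sub>R Complex x b"
    using assms by (auto simp: closed_segment_def)
  show "z = Complex x (Im z)" unfolding u(3) by (simp add: complex_eq_iff algebra_simps)
  have im: "Im z = (1 - u) * a + u * b" unfolding u(3) by simp
  have "(1 - u) * min a b + u * min a b \<le> (1 - u) * a + u * b"
    using u by (intro add_mono mult_left_mono) auto
  then show "min a b \<le> Im z" using im by (simp add: algebra_simps)
  have "(1 - u) * a + u * b \<le> (1 - u) * max a b + u * max a b"
    using u by (intro add_mono mult_left_mono) auto
  then show "Im z \<le> max a b" using im by (simp add: algebra_simps)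
qed

lemma zeta_deriv_on_line_lipschitz:
  assumes T: "T \<ge> 32" and tT: "\<bar>t - T\<bar> \<le> 1"
  shows "norm (zeta_deriv m (Complex 1 t) - zeta_deriv m (Complex 1 T))
           \<le> 401 * fact (Suc m) * 2 ^ (m + 2) * ln T ^ (m + 2) * \<bar>t - T\<bar>"
proof -
  define L where "L = 401 * fact (Suc m) * (2 * ln T) ^ (m + 2)"
  have "norm (zeta_deriv m (Complex 1 t) - zeta_deriv m (Complex 1 T)) \<le> L * norm (Complex 1 t - Complex 1 T)"
  proof (rule field_differentiable_bound[of "closed_segment (Complex 1 T) (Complex 1 t)"])
    fix z assume "z \<in> closed_segment (Complex 1 T) (Complex 1 t)"
    note vertical = closed_segment_vertical[OF this]
    have u: "16 \<le> Im z" "Im z \<le> T + 1" using vertical(2,3) T tT by (auto simp: abs_le_iff)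
    then show "(zeta_deriv m has_field_derivative zeta_deriv (Suc m) z)
                 (at z within closed_segment (Complex 1 T) (Complex 1 t))"
      by (intro has_field_derivative_zeta_deriv) (auto simp: complex_eq_iff)
    have "norm (zeta_deriv (Suc m) z) \<le> 401 * fact (Suc m) * ln (Im z) ^ (m + 2)"
      using norm_zeta_deriv_Suc_on_line_le[OF u(1)] vertical(1) by metis
    also have "\<dots> \<le> L"
      unfolding L_def using u T ln_le_two_ln[of T "Im z"]
      by (intro mult_left_mono power_mono) auto
    finally show "norm (zeta_deriv (Suc m) z) \<le> L" .
  qed auto
  also have "norm (Complex 1 t - Complex 1 T) = \<bar>t - T\<bar>" by (simp add: cmod_def)
  finally show ?thesis by (simp add: L_def power_mult_distrib mult_ac)
qed

definition window_mean :: "(real \<Rightarrow> real) \<Rightarrow> real \<Rightarrow> real \<Rightarrow> real" where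
  "window_mean f D T = 1 / (2 * D) * integral {T - D .. T + D} f"

lemma window_mean_le:
  assumes "0 < D" "continuous_on {T - D .. T + D} f" "\<And>t. t \<in> {T - D .. T + D} \<Longrightarrow> f t \<le> B"
  shows "window_mean f D T \<le> B"
proof -
  have "integral {T - D .. T + D} f \<le> integral {T - D .. T + D} (\<lambda>t. B)"
    using assms by (intro integral_le integrable_continuous_interval) auto
  then show ?thesis using assms(1) by (simp add: window_mean_def field_simps)
qed

lemma window_mean_ge:
  assumes "0 < D" "continuous_on {T - D .. T + D} f" "\<And>t. t \<in> {T - D .. T + D} \<Longrightarrow> B \<le> f t"
  shows "B \<le> window_mean f D T"
proof -
  have "integral {T - D .. T + D} (\<lambda>t. B) \<le> integral {T - D .. T + D} f"
    using assms by (intro integral_le integrable_continuous_interval) auto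
  then show ?thesis using assms(1) by (simp add: window_mean_def field_simps)
qed

lemma Delta_pos: "T \<ge> 16 \<Longrightarrow> 0 < Delta m T"
  using ln_ge_two[of T] by (simp add: Delta_def)

lemma Delta_le_one: "T \<ge> 16 \<Longrightarrow> Delta m T \<le> 1"
  using ln_ge_two[of T] one_le_power[of "ln T" "m + 2"] by (simp add: Delta_def)

lemma continuous_on_window:
  assumes "T \<ge> 16"
  shows "continuous_on {T - Delta m T .. T + Delta m T} (\<lambda>t. norm (zeta_deriv m (Complex 1 t)) ^ n)"
  using continuous_on_subset[OF continuous_on_zeta_deriv_line[of m]] Delta_le_one[OF assms, of m] assms
  by (intro continuous_intros) auto

lemma ln_powr_on_window_le:
  assumes T: "T \<ge> 32" and t: "t \<in> {T - Delta m T .. T + Delta m T}" and p: "p \<ge> 0"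
  shows "ln t powr p \<le> 2 powr p * ln T powr p"
proof -
  have t_bounds: "16 \<le> t" "t \<le> T + 1" using t T Delta_le_one[of T m] by auto
  have "ln t powr p \<le> (2 * ln T) powr p"
    using ln_ge_two[OF t_bounds(1)] ln_le_two_ln[of T t] t_bounds T p by (intro powr_mono2) auto
  also have "\<dots> = 2 powr p * ln T powr p" using ln_ge_two[of T] T by (simp add: powr_mult)
  finally show ?thesis .
qed

lemma zeta_deriv_moment_bigo:
  assumes bigo: "(\<lambda>t. zeta_deriv m (Complex 1 t)) \<in> O[at_top](\<lambda>t. of_real (ln t powr \<delta>))"
    and \<delta>: "\<delta> \<ge> 0"
  shows "(\<lambda>T. window_mean (\<lambda>t. norm (zeta_deriv m (Complex 1 t)) ^ n) (Delta m T) T)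
           \<in> O[at_top](\<lambda>T. ln T powr (n * \<delta>))"
proof -
  obtain c where c: "c > 0" and "eventually (\<lambda>t. norm (zeta_deriv m (Complex 1 t))
      \<le> c * norm (of_real (ln t powr \<delta>) :: complex)) at_top"
    using landau_o.bigE[OF bigo] by blast
  then obtain t0 where t0: "\<And>t. t \<ge> t0 \<Longrightarrow> norm (zeta_deriv m (Complex 1 t)) \<le> c * ln t powr \<delta>"
    by (auto simp: eventually_at_top_linorder)
  define K where "K = c ^ n * 2 powr (n * \<delta>)"
  have "eventually (\<lambda>T. norm (window_mean (\<lambda>t. norm (zeta_deriv m (Complex 1 t)) ^ n) (Delta m T) T)
          \<le> K * norm (ln T powr (n * \<delta>))) at_top"
    unfolding eventually_at_top_linorder
  proof (intro exI[of _ "max 32 (t0 + 1)"] allI impI)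
    fix T :: real assume T: "T \<ge> max 32 (t0 + 1)"
    have D: "0 < Delta m T" "Delta m T \<le> 1" using Delta_pos Delta_le_one T by auto
    have pointwise: "norm (zeta_deriv m (Complex 1 t)) ^ n \<le> K * ln T powr (n * \<delta>)"
      if t: "t \<in> {T - Delta m T .. T + Delta m T}" for t
    proof -
      have t_ge: "t \<ge> t0" "t \<ge> 16" using t T D by auto
      have "norm (zeta_deriv m (Complex 1 t)) ^ n \<le> (c * ln t powr \<delta>) ^ n"
        using t0[OF t_ge(1)] by (intro power_mono) auto
      also have "\<dots> = c ^ n * ln t powr (n * \<delta>)"
        using ln_ge_two[OF t_ge(2)] by (simp add: power_mult_distrib powr_power mult.commute)
      also have "\<dots> \<le> c ^ n * (2 powr (n * \<delta>) * ln T powr (n * \<delta>))"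
        using c t T \<delta> by (intro mult_left_mono ln_powr_on_window_le) auto
      finally show ?thesis by (simp add: K_def mult.assoc)
    qed
    have "0 \<le> window_mean (\<lambda>t. norm (zeta_deriv m (Complex 1 t)) ^ n) (Delta m T) T"
      using D(1) continuous_on_window T by (intro window_mean_ge) auto
    moreover have "window_mean (\<lambda>t. norm (zeta_deriv m (Complex 1 t)) ^ n) (Delta m T) T
        \<le> K * ln T powr (n * \<delta>)"
      using D(1) continuous_on_window T pointwise by (intro window_mean_le) auto
    ultimately show "norm (window_mean (\<lambda>t. norm (zeta_deriv m (Complex 1 t)) ^ n) (Delta m T) T)
        \<le> K * norm (ln T powr (n * \<delta>))"
      by simp
  qed
  then show ?thesis by (rule bigoI)
qed

text \<open>The window has length of order 1 / (log T)^(m+2), exactly compensating the Lipschitz constant.\<close>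
lemma norm_zeta_deriv_on_window_ge:
  assumes T: "T \<ge> 32" and t: "t \<in> {T - Delta m T .. T + Delta m T}"
  shows "norm (zeta_deriv m (Complex 1 T)) - 401 * fact (Suc m) * 2 ^ (m + 2) \<le> norm (zeta_deriv m (Complex 1 t))"
proof -
  have lT: "ln T \<ge> 2" using ln_ge_two[of T] T by simp
  have tT: "\<bar>t - T\<bar> \<le> Delta m T" using t by (auto simp: abs_le_iff)
  have "norm (zeta_deriv m (Complex 1 t) - zeta_deriv m (Complex 1 T))
      \<le> 401 * fact (Suc m) * 2 ^ (m + 2) * ln T ^ (m + 2) * \<bar>t - T\<bar>"
    using Delta_le_one[of T m] T tT by (intro zeta_deriv_on_line_lipschitz) auto
  also have "\<dots> \<le> 401 * fact (Suc m) * 2 ^ (m + 2) * ln T ^ (m + 2) * Delta m T"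
    using tT lT by (intro mult_left_mono) auto
  also have "\<dots> = 401 * fact (Suc m) * 2 ^ (m + 2)" using lT by (simp add: Delta_def)
  finally show ?thesis
    using norm_triangle_ineq2[of "zeta_deriv m (Complex 1 T)" "zeta_deriv m (Complex 1 t)"]
    by (simp add: norm_minus_commute)
qed

lemma norm_zeta_deriv_le_window_mean:
  assumes T: "T \<ge> 32"
  shows "norm (zeta_deriv m (Complex 1 T))
           \<le> 401 * fact (Suc m) * 2 ^ (m + 2)
              + sqrt (window_mean (\<lambda>t. norm (zeta_deriv m (Complex 1 t)) ^ 2) (Delta m T) T)"
proof -
  define a where "a = norm (zeta_deriv m (Complex 1 T))"
  define L :: real where "L = 401 * fact (Suc m) * 2 ^ (m + 2)"
  define M where "M = window_mean (\<lambda>t. norm (zeta_deriv m (Complex 1 t)) ^ 2) (Delta m T) T"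
  have window: "0 < Delta m T" "continuous_on {T - Delta m T .. T + Delta m T}
      (\<lambda>t. norm (zeta_deriv m (Complex 1 t)) ^ 2)"
    using Delta_pos[of T m] continuous_on_window[of T m 2] T by auto
  have "a - L \<le> sqrt M"
  proof (cases "a \<le> L")
    case True
    have "0 \<le> M" unfolding M_def using window by (intro window_mean_ge) auto
    with True show ?thesis using real_sqrt_ge_zero[of M] by linarith
  next
    case False
    have "(a - L) ^ 2 \<le> M"
      unfolding M_def using window
    proof (intro window_mean_ge power_mono)
      fix t assume "t \<in> {T - Delta m T .. T + Delta m T}"
      then show "a - L \<le> norm (zeta_deriv m (Complex 1 t))"
        using norm_zeta_deriv_on_window_ge[OF T] unfolding a_def L_def by blast
    qed (use False in auto)
    then show ?thesis using False by (intro real_le_rsqrt) auto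
  qed
  then show ?thesis by (simp add: a_def L_def M_def)
qed

lemma zeta_deriv_bigo_of_mean_square_bigo:
  assumes bigo: "(\<lambda>T. window_mean (\<lambda>t. norm (zeta_deriv m (Complex 1 t)) ^ 2) (Delta m T) T)
                   \<in> O[at_top](\<lambda>T. ln T powr (2 * \<epsilon>))"
    and \<epsilon>: "\<epsilon> \<ge> 0"
  shows "(\<lambda>t. zeta_deriv m (Complex 1 t)) \<in> O[at_top](\<lambda>t. of_real (ln t powr \<epsilon>))"
proof -
  define M where "M T = window_mean (\<lambda>t. norm (zeta_deriv m (Complex 1 t)) ^ 2) (Delta m T) T" for T
  obtain c where c: "c > 0"
    and "eventually (\<lambda>T. norm (M T) \<le> c * norm (ln T powr (2 * \<epsilon>))) at_top"
    using landau_o.bigE[OF bigo] unfolding M_def by blast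
  then obtain T0 where T0: "\<And>T. T \<ge> T0 \<Longrightarrow> norm (M T) \<le> c * norm (ln T powr (2 * \<epsilon>))"
    by (auto simp: eventually_at_top_linorder)
  define L :: real where "L = 401 * fact (Suc m) * 2 ^ (m + 2)"
  have "eventually (\<lambda>T. norm (zeta_deriv m (Complex 1 T))
      \<le> (L + sqrt c) * norm (of_real (ln T powr \<epsilon>) :: complex)) at_top"
    unfolding eventually_at_top_linorder
  proof (intro exI[of _ "max 32 T0"] allI impI)
    fix T :: real assume T: "T \<ge> max 32 T0"
    define P where "P = ln T powr \<epsilon>"
    have P: "P \<ge> 1" using ln_ge_two[of T] T \<epsilon> by (simp add: P_def ge_one_powr_ge_zero)
    have "M T \<le> c * norm (ln T powr (2 * \<epsilon>))"
      using T0[of T] T by (simp only: real_norm_def) linarith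
    also have "norm (ln T powr (2 * \<epsilon>)) = P ^ 2"
      unfolding P_def using ln_ge_two[of T] T powr_power[of "ln T" \<epsilon> 2] by simp
    also have "c * P ^ 2 = (sqrt c * P) ^ 2" using c by (simp add: power_mult_distrib)
    finally have "sqrt (M T) \<le> sqrt c * P" using c P by (intro real_le_lsqrt) auto
    then have "norm (zeta_deriv m (Complex 1 T)) \<le> L + sqrt c * P"
      using norm_zeta_deriv_le_window_mean[of T m] T unfolding M_def L_def by linarith
    also have "\<dots> \<le> L * P + sqrt c * P" using mult_left_mono[of 1 P L] P by (simp add: L_def)
    also have "\<dots> = (L + sqrt c) * P" by (simp add: algebra_simps)
    finally show "norm (zeta_deriv m (Complex 1 T)) \<le> (L + sqrt c) * norm (of_real (ln T powr \<epsilon>) :: complex)"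
      using P by (simp add: P_def)
  qed
  then show ?thesis by (rule bigoI)
qed

theorem theorem1:
  fixes m :: nat
  shows "(\<forall>\<epsilon>::real>0. (\<lambda>t::real. zeta_deriv m (Complex 1 t)) \<in> O[at_top](\<lambda>t. of_real (ln t powr \<epsilon>)))
     \<longleftrightarrow>
     (\<forall>\<epsilon>::real>0. \<forall>k::nat. k > 0 \<longrightarrow>
        (\<lambda>T::real. 1 / (2 * Delta m T) *
            integral {T - Delta m T .. T + Delta m T}
              (\<lambda>t. norm (zeta_deriv m (Complex 1 t)) ^ (2 * k)))
        \<in> O[at_top](\<lambda>T. ln T powr \<epsilon>))"
  unfolding window_mean_def[symmetric]
proof (intro iffI allI impI)
  fix \<epsilon> :: real and k :: nat
  assume "\<forall>\<epsilon>>0. (\<lambda>t. zeta_deriv m (Complex 1 t)) \<in> O[at_top](\<lambda>t. of_real (ln t powr \<epsilon>))"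
    and "\<epsilon> > 0" "k > 0"
  then have "(\<lambda>t. zeta_deriv m (Complex 1 t)) \<in> O[at_top](\<lambda>t. of_real (ln t powr (\<epsilon> / (2 * k))))"
    by simp
  from zeta_deriv_moment_bigo[OF this, of "2 * k"] \<open>\<epsilon> > 0\<close> \<open>k > 0\<close>
  show "(\<lambda>T. window_mean (\<lambda>t. norm (zeta_deriv m (Complex 1 t)) ^ (2 * k)) (Delta m T) T)
          \<in> O[at_top](\<lambda>T. ln T powr \<epsilon>)"
    by simp
next
  fix \<epsilon> :: real
  assume moments: "\<forall>\<epsilon>>0. \<forall>k>0.
      (\<lambda>T. window_mean (\<lambda>t. norm (zeta_deriv m (Complex 1 t)) ^ (2 * k)) (Delta m T) T)
        \<in> O[at_top](\<lambda>T. ln T powr \<epsilon>)"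
    and "\<epsilon> > 0"
  then have "(\<lambda>T. window_mean (\<lambda>t. norm (zeta_deriv m (Complex 1 t)) ^ 2) (Delta m T) T)
               \<in> O[at_top](\<lambda>T. ln T powr (2 * \<epsilon>))"
    using moments[rule_format, of "2 * \<epsilon>" 1] by simp
  then show "(\<lambda>t. zeta_deriv m (Complex 1 t)) \<in> O[at_top](\<lambda>t. of_real (ln t powr \<epsilon>))"
    using \<open>\<epsilon> > 0\<close> by (intro zeta_deriv_bigo_of_mean_square_bigo) auto
qed

end
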